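(* Let $a>0$ and let $h:[0,a)\to\mathbb{R}$ be a function which is bounded from below such that $h(0)=0$ and $h'_+(0)=0$. Then there exists a separately convex function $f:(-a,a)^2\to\mathbb{R}$ such that its trace $g(t)=f(t,t)$ is an odd function with $g'(0)=0$ and $g(t)\le h(t)$ for $0\le t<a$.
   Context: A function $f$ defined on an open set $U\subset\mathbb{R}^2$ is called separately convex if it is convex on every line segment contained in $U$ that is parallel to a coordinate axis. $h'_+(0)$ denotes the right derivative of $h$ at $0$. *)

theory Defs
  imports "HOL-Analysis.Analysis"
begin

definition sep_convex_on :: "(real \<times> real) set \<Rightarrow> (real \<times> real \<Rightarrow> real) \<Rightarrow> bool" where
  "sep_convex_on U f \<longleftrightarrow>
     (\<forall>y x1 x2. closed_segment (x1, y) (x2, y) \<subseteq> U \<longrightarrow>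
        convex_on (closed_segment x1 x2) (\<lambda>x. f (x, y))) \<and>
     (\<forall>x y1 y2. closed_segment (x, y1) (x, y2) \<subseteq> U \<longrightarrow>
        convex_on (closed_segment y1 y2) (\<lambda>y. f (x, y)))"

end

theory Submission
  imports Defs
begin

text \<open>
  The building block is \<open>block x y = H((x - y)/2, w((x + y)/2)) - (x + y)/16 - 1/2\<close>, where
  \<open>H(d, w)\<close> is the Huber smoothing of \<open>|d|\<close> at scale \<open>w\<close> and the width
  \<open>w(m) = 1 + m/(4(1 + m\<^sup>2))\<close> stays in \<open>[7/8, 9/8]\<close> with \<open>|w'| \<le> 1/4\<close> and \<open>|w''| \<le> 1\<close>.
  Since \<open>w\<close> varies so slowly, the slope of \<open>x \<mapsto> block x y\<close> stays nondecreasing across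
  the quadratic region, so the block is separately convex; it is symmetric, grows at most like
  \<open>|x| + |y|\<close>, and its trace is the odd function \<open>-t\<^sup>3/(8(1 + t\<^sup>2))\<close>.

  Since \<open>h'\<^sub>+(0) = 0\<close> there are scales \<open>D\<^sub>n > 0\<close> with \<open>|h t| \<le> t/2\<^sup>n\<close> on \<open>[0, D\<^sub>n)\<close>.
  The superposition \<open>f = \<Sum>\<^sub>n c\<^sub>n D\<^sub>n block(x/D\<^sub>n, y/D\<^sub>n)\<close> with \<open>c\<^sub>n = M/2\<^sup>n\<close> converges,
  stays separately convex and has trace \<open>t q(t)\<close> with \<open>q\<close> even, continuous, nonpositive and
  \<open>q(0) = 0\<close>. All terms of the trace are nonpositive for \<open>t \<ge> 0\<close>, and for
  \<open>D\<^sub>n \<le> t\<close> the \<open>n\<close>-th one is at most \<open>-c\<^sub>n t/16\<close>: for \<open>t \<in> [D\<^sub>j\<^sub>+\<^sub>1, D\<^sub>j)\<close> this beats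
  \<open>-t/2\<^sup>j \<le> h t\<close>, and beyond \<open>D\<^sub>0\<close> it beats the lower bound of \<open>h\<close>.
\<close>

lemma isCont_eventually_pos:
  fixes f :: "real \<Rightarrow> real"
  assumes "isCont f x" "0 < f x"
  shows "\<forall>\<^sub>F y in nhds x. 0 < f y"
proof -
  have "(f \<longlongrightarrow> f x) (nhds x)"
    using assms(1) by (simp add: isCont_def tendsto_at_iff_tendsto_nhds)
  then show ?thesis
    using assms(2) by (rule order_tendstoD)
qed

lemma eventually_abs_eq_sgn_mult:
  fixes d :: "real \<Rightarrow> real"
  assumes "isCont d x" "d x \<noteq> 0"
  shows "\<forall>\<^sub>F y in nhds x. \<bar>d y\<bar> = sgn (d x) * d y"
proof -
  have "\<forall>\<^sub>F y in nhds x. 0 < d x * d y"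
    using assms by (intro isCont_eventually_pos continuous_intros) (auto simp: zero_less_mult_iff)
  then show ?thesis
    by eventually_elim (auto simp: sgn_if zero_less_mult_iff)
qed

lemma has_real_derivative_eventually_either:
  fixes f g k :: "real \<Rightarrow> real"
  assumes "\<forall>\<^sub>F y in nhds x. f y = g y \<or> f y = k y"
    and "f x = g x" "g x = k x"
    and "(g has_real_derivative D) (at x)" "(k has_real_derivative D) (at x)"
  shows "(f has_real_derivative D) (at x)"
proof -
  have g: "((\<lambda>y. (g y - g x) / (y - x)) \<longlongrightarrow> D) (at x)"
    and k: "((\<lambda>y. (k y - k x) / (y - x)) \<longlongrightarrow> D) (at x)"
    using assms(4,5) by (simp_all add: has_field_derivative_iff)
  have fgk: "\<forall>\<^sub>F y in at x. f y = g y \<or> f y = k y"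
    using assms(1) by (simp add: eventually_nhds_conv_at)
  have "((\<lambda>y. (f y - f x) / (y - x)) \<longlongrightarrow> D) (at x)"
  proof (rule tendstoI)
    fix e :: real
    assume "0 < e"
    from tendstoD [OF g this] tendstoD [OF k this] fgk
    show "\<forall>\<^sub>F y in at x. dist ((f y - f x) / (y - x)) D < e"
      by eventually_elim (use assms(2,3) in auto)
  qed
  then show ?thesis
    by (simp add: has_field_derivative_iff)
qed

lemma convex_on_suminf:
  fixes g :: "nat \<Rightarrow> 'a::real_vector \<Rightarrow> real"
  assumes "convex S" "\<And>n. convex_on S (g n)" "\<And>x. x \<in> S \<Longrightarrow> summable (\<lambda>n. g n x)"
  shows "convex_on S (\<lambda>x. \<Sum>n. g n x)"
proof (rule convex_onI [OF _ assms(1)])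
  fix t :: real and x y
  assume "0 < t" "t < 1" "x \<in> S" "y \<in> S"
  then have "(1 - t) *\<^sub>R x + t *\<^sub>R y \<in> S"
    using assms(1) by (simp add: convexD)
  moreover have "g n ((1 - t) *\<^sub>R x + t *\<^sub>R y) \<le> (1 - t) * g n x + t * g n y" for n
    using convex_onD [OF assms(2)] \<open>0 < t\<close> \<open>t < 1\<close> \<open>x \<in> S\<close> \<open>y \<in> S\<close> by simp
  ultimately have "(\<Sum>n. g n ((1 - t) *\<^sub>R x + t *\<^sub>R y)) \<le> (\<Sum>n. (1 - t) * g n x + t * g n y)"
    using \<open>x \<in> S\<close> \<open>y \<in> S\<close> by (intro suminf_le summable_add summable_mult assms(3))
  also have "\<dots> = (1 - t) * (\<Sum>n. g n x) + t * (\<Sum>n. g n y)"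
    using assms(3) \<open>x \<in> S\<close> \<open>y \<in> S\<close>
    by (simp add: suminf_add [symmetric] suminf_mult summable_mult)
  finally show "(\<Sum>n. g n ((1 - t) *\<^sub>R x + t *\<^sub>R y)) \<le> (1 - t) * (\<Sum>n. g n x) + t * (\<Sum>n. g n y)" .
qed

lemma convex_on_compose_linear:
  fixes g :: "'b::real_vector \<Rightarrow> real"
  assumes "convex_on UNIV g" "linear f"
  shows "convex_on UNIV (\<lambda>x. g (f x))"
proof (rule convex_onI)
  fix t :: real and x y
  assume "0 < t" "t < 1"
  then show "g (f ((1 - t) *\<^sub>R x + t *\<^sub>R y)) \<le> (1 - t) * g (f x) + t * g (f y)"
    using convex_onD [OF assms(1)] by (simp add: linear_add [OF assms(2)] linear_scale [OF assms(2)])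
qed simp

lemma sep_convex_on_if_convex_slices:
  assumes "\<And>y. convex_on UNIV (\<lambda>x. f (x, y))" "\<And>x. convex_on UNIV (\<lambda>y. f (x, y))"
  shows "sep_convex_on U f"
  unfolding sep_convex_on_def
  by (blast intro: convex_on_subset [OF assms(1)] convex_on_subset [OF assms(2)] convex_closed_segment)

section \<open>Huber smoothing of the absolute value\<close>

definition huber :: "real \<Rightarrow> real \<Rightarrow> real" where
  "huber d w = (if \<bar>d\<bar> \<le> w then d\<^sup>2 / (2 * w) + w / 2 else \<bar>d\<bar>)"

lemma huber_minus [simp]: "huber (- d) w = huber d w"
  by (simp add: huber_def)

lemma huber_bounds:
  assumes "0 < w"
  shows "w / 2 \<le> huber d w" "huber d w \<le> \<bar>d\<bar> + w / 2"
proof -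
  have "d\<^sup>2 / (2 * w) \<le> \<bar>d\<bar> / 2" if "\<bar>d\<bar> \<le> w"
  proof -
    have "d\<^sup>2 = \<bar>d\<bar> * \<bar>d\<bar>"
      by (simp add: power2_eq_square)
    also have "\<dots> \<le> \<bar>d\<bar> * w"
      using that by (intro mult_left_mono) auto
    finally show ?thesis
      using assms by (simp add: divide_simps)
  qed
  then show "huber d w \<le> \<bar>d\<bar> + w / 2"
    using assms by (auto simp: huber_def)
  show "w / 2 \<le> huber d w"
    using assms by (simp add: huber_def)
qed

lemma has_real_derivative_huber:
  fixes d w :: "real \<Rightarrow> real"
  assumes d: "(d has_real_derivative d') (at x)" and w: "(w has_real_derivative w') (at x)"
    and "0 < w x"
  shows "((\<lambda>y. huber (d y) (w y)) has_real_derivative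
           (if \<bar>d x\<bar> \<le> w x then d x / w x * d' + (1 - (d x / w x)\<^sup>2) * w' / 2
            else sgn (d x) * d')) (at x)"
proof -
  let ?quad = "\<lambda>y. (d y)\<^sup>2 / (2 * w y) + w y / 2"
  let ?s = "d x / w x"
  have quad: "(?quad has_real_derivative ?s * d' + (1 - ?s\<^sup>2) * w' / 2) (at x)"
    using d w \<open>0 < w x\<close>
    by (auto intro!: derivative_eq_intros simp: field_simps power2_eq_square)
  have lin: "((\<lambda>y. sgn (d x) * d y) has_real_derivative sgn (d x) * d') (at x)"
    using d by (rule DERIV_cmult)
  have cont: "isCont d x" "isCont w x"
    using d w by (simp_all add: DERIV_isCont)
  consider "\<bar>d x\<bar> < w x" | "w x < \<bar>d x\<bar>" | "\<bar>d x\<bar> = w x"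
    by linarith
  then show ?thesis
  proof cases
    case 1
    have "\<forall>\<^sub>F y in nhds x. 0 < w y - \<bar>d y\<bar>"
      using cont 1 by (intro isCont_eventually_pos continuous_intros) simp_all
    then have "\<forall>\<^sub>F y in nhds x. huber (d y) (w y) = ?quad y"
      by eventually_elim (simp add: huber_def)
    then show ?thesis
      using quad 1 by (subst DERIV_cong_ev [OF refl _ refl]) auto
  next
    case 2
    have "\<forall>\<^sub>F y in nhds x. 0 < \<bar>d y\<bar> - w y"
      using cont 2 by (intro isCont_eventually_pos continuous_intros) simp_all
    moreover have "\<forall>\<^sub>F y in nhds x. \<bar>d y\<bar> = sgn (d x) * d y"
      using cont 2 \<open>0 < w x\<close> by (intro eventually_abs_eq_sgn_mult) auto
    ultimately have "\<forall>\<^sub>F y in nhds x. huber (d y) (w y) = sgn (d x) * d y"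
      by eventually_elim (simp add: huber_def)
    then show ?thesis
      using lin 2 by (subst DERIV_cong_ev [OF refl _ refl]) auto
  next
    case 3
    then have s: "?s = sgn (d x)"
      using \<open>0 < w x\<close> by (auto simp: sgn_if abs_if field_simps)
    have "\<forall>\<^sub>F y in nhds x. \<bar>d y\<bar> = sgn (d x) * d y"
      using cont 3 \<open>0 < w x\<close> by (intro eventually_abs_eq_sgn_mult) auto
    then have "\<forall>\<^sub>F y in nhds x. huber (d y) (w y) = ?quad y \<or> huber (d y) (w y) = sgn (d x) * d y"
      by eventually_elim (simp add: huber_def)
    moreover have "?quad x = sgn (d x) * d x"
    proof -
      have "(d x)\<^sup>2 = (w x)\<^sup>2"
        using 3 by (metis power2_abs)
      then have "?quad x = w x"
        using \<open>0 < w x\<close> by (simp add: power2_eq_square field_simps)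
      then show ?thesis
        using 3 by (simp add: abs_sgn mult.commute)
    qed
    moreover have "huber (d x) (w x) = ?quad x"
      using 3 by (simp add: huber_def)
    moreover have "((\<lambda>y. sgn (d x) * d y) has_real_derivative ?s * d' + (1 - ?s\<^sup>2) * w' / 2) (at x)"
      using lin s 3 \<open>0 < w x\<close> by (auto simp: sgn_if)
    ultimately show ?thesis
      using quad 3 by (simp add: has_real_derivative_eventually_either)
  qed
qed

section \<open>A slowly varying width\<close>

definition width :: "real \<Rightarrow> real" where
  "width m = 1 + m / (4 * (1 + m\<^sup>2))"

definition width' :: "real \<Rightarrow> real" where
  "width' m = (1 - m\<^sup>2) / (4 * (1 + m\<^sup>2)\<^sup>2)"

definition width'' :: "real \<Rightarrow> real" where
  "width'' m = (m ^ 3 - 3 * m) / (2 * (1 + m\<^sup>2) ^ 3)"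

lemma one_plus_square_pos: "0 < 1 + (m::real)\<^sup>2"
  by (simp add: add_pos_nonneg)

lemma has_real_derivative_width: "(width has_real_derivative width' m) (at m)"
proof -
  have "1 + m\<^sup>2 \<noteq> 0"
    using one_plus_square_pos[of m] by linarith
  then show ?thesis
    unfolding width_def [abs_def] width'_def
    by (auto intro!: derivative_eq_intros simp: frac_eq_eq) algebra
qed

lemma has_real_derivative_width': "(width' has_real_derivative width'' m) (at m)"
proof -
  have "1 + m\<^sup>2 \<noteq> 0"
    using one_plus_square_pos[of m] by linarith
  then show ?thesis
    unfolding width'_def [abs_def] width''_def
    apply (auto intro!: derivative_eq_intros)
     apply (simp add: \<open>1 + m\<^sup>2 \<noteq> 0\<close>)
    apply (subst frac_eq_eq)
      apply (simp add: \<open>1 + m\<^sup>2 \<noteq> 0\<close>)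
     apply (simp add: \<open>1 + m\<^sup>2 \<noteq> 0\<close>)
    apply algebra
    done
qed

lemma width_dist_one: "\<bar>width m - 1\<bar> \<le> \<bar>m\<bar> / 4"
proof -
  have "\<bar>m\<bar> / (4 * (1 + m\<^sup>2)) \<le> \<bar>m\<bar> / 4"
    by (intro divide_left_mono) (auto simp: add_pos_nonneg)
  then show ?thesis
    by (simp add: width_def abs_divide)
qed

lemma width_bounds: "7/8 \<le> width m" "width m \<le> 9/8"
proof -
  have "2 * \<bar>m\<bar> \<le> 1 + m\<^sup>2"
    using zero_le_power2[of "\<bar>m\<bar> - 1"] by (simp add: power2_eq_square algebra_simps)
  then have "\<bar>m\<bar> / (4 * (1 + m\<^sup>2)) \<le> 1/8"
    using one_plus_square_pos[of m] by (simp add: divide_simps)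
  then have "\<bar>width m - 1\<bar> \<le> 1/8"
    by (simp add: width_def abs_divide)
  then show "7/8 \<le> width m" "width m \<le> 9/8"
    by arith+
qed

lemma width'_bound: "\<bar>width' m\<bar> \<le> 1/4"
proof -
  have "(1 + m\<^sup>2)\<^sup>2 = 1 + 2 * m\<^sup>2 + m\<^sup>2 * m\<^sup>2"
    by (simp add: power2_eq_square algebra_simps)
  then have "\<bar>1 - m\<^sup>2\<bar> \<le> (1 + m\<^sup>2)\<^sup>2"
    by (simp add: abs_le_iff)
  then show ?thesis
    using one_plus_square_pos[of m] by (simp add: width'_def abs_divide divide_simps)
qed

lemma width''_bound: "\<bar>width'' m\<bar> \<le> 1"
proof -
  define u where "u = \<bar>m\<bar>"
  have "0 \<le> u"
    by (simp add: u_def)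
  have "\<bar>m ^ 3 - 3 * m\<bar> \<le> u ^ 3 + 3 * u"
    using abs_triangle_ineq4[of "m ^ 3" "3 * m"] by (simp add: u_def abs_mult power_abs)
  also have "\<dots> \<le> 2 * (1 + u\<^sup>2) ^ 3"
  proof -
    have "2 * (1 + u\<^sup>2) ^ 3 - (u ^ 3 + 3 * u)
        = 2 * (u - 3/4)\<^sup>2 + 7/8 + u\<^sup>2 * (6 * (u - 1/12)\<^sup>2 + 95/24) + 2 * (u ^ 3)\<^sup>2"
      by (simp add: power2_eq_square power3_eq_cube algebra_simps)
    moreover have "0 \<le> 2 * (u - 3/4)\<^sup>2 + 7/8 + u\<^sup>2 * (6 * (u - 1/12)\<^sup>2 + 95/24) + 2 * (u ^ 3)\<^sup>2"
      by (intro add_nonneg_nonneg mult_nonneg_nonneg) auto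
    ultimately show ?thesis
      by linarith
  qed
  finally show ?thesis
    using one_plus_square_pos[of m] by (simp add: width''_def u_def abs_divide divide_simps)
qed

lemma has_real_derivative_width_comp:
  assumes "(f has_real_derivative f') (at x within S)" "D = width' (f x) * f'"
  shows "((\<lambda>x. width (f x)) has_real_derivative D) (at x within S)"
  using DERIV_chain2 [OF has_real_derivative_width assms(1)] assms(2) by simp

lemma has_real_derivative_width'_comp:
  assumes "(f has_real_derivative f') (at x within S)" "D = width'' (f x) * f'"
  shows "((\<lambda>x. width' (f x)) has_real_derivative D) (at x within S)"
  using DERIV_chain2 [OF has_real_derivative_width' assms(1)] assms(2) by simp

section \<open>The building block\<close>

lemma abs_slope_formula_le:
  fixes s p :: real
  assumes "\<bar>s\<bar> \<le> 1" "\<bar>p\<bar> \<le> 1"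
  shows "\<bar>s + (1 - s\<^sup>2) * p / 2\<bar> \<le> 1"
proof -
  have "\<bar>(1 + s) * p\<bar> \<le> 2 * 1" "\<bar>(1 - s) * p\<bar> \<le> 2 * 1"
    using assms unfolding abs_mult by (intro mult_mono; simp add: abs_le_iff)+
  then have "0 \<le> (1 - s) * (1 - (1 + s) * p / 2)" "0 \<le> (1 + s) * (1 + (1 - s) * p / 2)"
    using assms by (intro mult_nonneg_nonneg; simp add: abs_le_iff)+
  then show ?thesis
    by (simp add: abs_le_iff power2_eq_square algebra_simps)
qed

lemma slope_formula_deriv_nonneg:
  fixes s p q w :: real
  assumes "\<bar>s\<bar> \<le> 1" "\<bar>p\<bar> \<le> 1/4" "\<bar>q\<bar> \<le> 1" "0 < w" "w \<le> 9/8"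
  shows "0 \<le> (1 - s * p)\<^sup>2 / (2 * w) + (1 - s\<^sup>2) * q / 4"
proof -
  have "\<bar>s * p\<bar> \<le> 1 * (1/4)"
    using assms unfolding abs_mult by (intro mult_mono) auto
  then have "(3/4)\<^sup>2 \<le> (1 - s * p)\<^sup>2"
    by (intro power_mono) (auto simp: abs_le_iff)
  then have "(3/4)\<^sup>2 / (2 * (9/8)) \<le> (1 - s * p)\<^sup>2 / (2 * w)"
    using assms by (intro frac_le) auto
  moreover have "0 \<le> 1 - s\<^sup>2" "1 - s\<^sup>2 \<le> 1"
    using assms by (auto simp: abs_le_iff abs_square_le_1)
  then have "\<bar>(1 - s\<^sup>2) * q\<bar> \<le> 1 * 1"
    using assms unfolding abs_mult by (intro mult_mono) auto
  moreover have "(3/4)\<^sup>2 / (2 * (9/8)) = (1/4 :: real)"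
    by (simp add: power2_eq_square)
  ultimately show ?thesis
    by (auto dest: abs_le_D2)
qed

definition block :: "real \<Rightarrow> real \<Rightarrow> real" where
  "block x y = huber ((x - y) / 2) (width ((x + y) / 2)) - (x + y) / 16 - 1 / 2"

definition block_ratio :: "real \<Rightarrow> real \<Rightarrow> real" where
  "block_ratio y x = ((x - y) / 2) / width ((x + y) / 2)"

definition inner_slope :: "real \<Rightarrow> real \<Rightarrow> real" where
  "inner_slope y x = block_ratio y x + (1 - (block_ratio y x)\<^sup>2) * width' ((x + y) / 2) / 2"

definition block_slope :: "real \<Rightarrow> real \<Rightarrow> real" where
  "block_slope y x =
     (if \<bar>(x - y) / 2\<bar> \<le> width ((x + y) / 2) then inner_slope y x else sgn ((x - y) / 2))"

lemma has_real_derivative_block: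
  "((\<lambda>x. block x y) has_real_derivative block_slope y x / 2 - 1/16) (at x)"
proof -
  have "((\<lambda>x. (x - y) / 2) has_real_derivative 1/2) (at x)"
    and "((\<lambda>x. width ((x + y) / 2)) has_real_derivative width' ((x + y) / 2) / 2) (at x)"
    by (auto intro!: derivative_eq_intros has_real_derivative_width_comp)
  then have "((\<lambda>x. huber ((x - y) / 2) (width ((x + y) / 2))) has_real_derivative
      block_slope y x / 2) (at x)"
    using width_bounds(1)[of "(x + y) / 2"]
    by (intro DERIV_cong [OF has_real_derivative_huber])
      (auto simp: block_slope_def inner_slope_def block_ratio_def field_simps)
  then show ?thesis
    unfolding block_def by (auto intro!: derivative_eq_intros)
qed

lemma has_real_derivative_block_ratio:
  "(block_ratio y has_real_derivative
      (1 - block_ratio y x * width' ((x + y) / 2)) / (2 * width ((x + y) / 2))) (at x)"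
proof -
  have "width ((x + y) / 2) \<noteq> 0"
    using width_bounds(1)[of "(x + y) / 2"] by linarith
  then show ?thesis
    unfolding block_ratio_def [abs_def]
    by (auto intro!: derivative_eq_intros has_real_derivative_width_comp simp: field_simps)
qed

lemma has_real_derivative_inner_slope:
  "(inner_slope y has_real_derivative
      (1 - block_ratio y x * width' ((x + y) / 2))\<^sup>2 / (2 * width ((x + y) / 2))
      + (1 - (block_ratio y x)\<^sup>2) * width'' ((x + y) / 2) / 4) (at x)"
proof -
  have "width ((x + y) / 2) \<noteq> 0"
    using width_bounds(1)[of "(x + y) / 2"] by linarith
  then show ?thesis
    unfolding inner_slope_def [abs_def]
    by (auto intro!: derivative_eq_intros has_real_derivative_block_ratio
        has_real_derivative_width'_comp simp: field_simps power2_eq_square)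
qed

lemma abs_block_ratio_le_one_iff:
  "\<bar>block_ratio y x\<bar> \<le> 1 \<longleftrightarrow> \<bar>(x - y) / 2\<bar> \<le> width ((x + y) / 2)"
  using width_bounds(1)[of "(x + y) / 2"] by (simp add: block_ratio_def abs_divide divide_le_eq ac_simps)

lemma block_slope_bounds: "\<bar>block_slope y x\<bar> \<le> 1"
proof (cases "\<bar>(x - y) / 2\<bar> \<le> width ((x + y) / 2)")
  case True
  then have "\<bar>block_ratio y x\<bar> \<le> 1"
    by (simp add: abs_block_ratio_le_one_iff)
  moreover have "\<bar>width' ((x + y) / 2)\<bar> \<le> 1"
    using width'_bound[of "(x + y) / 2"] by linarith
  ultimately show ?thesis
    using True by (simp add: block_slope_def inner_slope_def abs_slope_formula_le)
qed (simp add: block_slope_def abs_sgn_eq)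

text \<open>Both boundary functions increase, so for fixed \<open>y\<close> the quadratic branch of
  \<open>block x y\<close> is active on an interval of \<open>x\<close>.\<close>

lemma block_boundary_mono:
  assumes "\<bar>e\<bar> \<le> 1" "x \<le> x'"
  shows "(x - y) / 2 + e * width ((x + y) / 2) \<le> (x' - y) / 2 + e * width ((x' + y) / 2)"
proof -
  have "((\<lambda>x. (x - y) / 2 + e * width ((x + y) / 2)) has_real_derivative
      1/2 + e * (width' ((z + y) / 2) / 2)) (at z)" for z
    by (auto intro!: derivative_eq_intros has_real_derivative_width_comp)
  moreover have "0 \<le> 1/2 + e * (width' ((z + y) / 2) / 2)" for z
  proof -
    have "\<bar>e * width' ((z + y) / 2)\<bar> \<le> 1 * (1/4)"
      unfolding abs_mult using assms(1) width'_bound by (intro mult_mono) auto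
    then show ?thesis
      by (simp add: abs_le_iff)
  qed
  ultimately show ?thesis
    using DERIV_nonneg_imp_nondecreasing [OF assms(2), of "\<lambda>x. (x - y) / 2 + e * width ((x + y) / 2)"]
    by blast
qed

lemma inner_slope_mono:
  assumes "x \<le> x'" "\<And>z. x \<le> z \<Longrightarrow> z \<le> x' \<Longrightarrow> \<bar>block_ratio y z\<bar> \<le> 1"
  shows "inner_slope y x \<le> inner_slope y x'"
proof (rule DERIV_nonneg_imp_nondecreasing [OF assms(1)])
  fix z
  assume "x \<le> z" "z \<le> x'"
  then have "0 \<le> (1 - block_ratio y z * width' ((z + y) / 2))\<^sup>2 / (2 * width ((z + y) / 2))
      + (1 - (block_ratio y z)\<^sup>2) * width'' ((z + y) / 2) / 4"
    using assms(2) width_bounds width'_bound width''_bound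
    by (intro slope_formula_deriv_nonneg) (auto intro: order.strict_trans2 [of 0 "7/8"])
  then show "\<exists>D. (inner_slope y has_real_derivative D) (at z) \<and> 0 \<le> D"
    using has_real_derivative_inner_slope by blast
qed

lemma block_slope_mono:
  assumes "x \<le> x'"
  shows "block_slope y x \<le> block_slope y x'"
proof -
  consider "(x - y) / 2 < - width ((x + y) / 2)" | "width ((x' + y) / 2) < (x' - y) / 2"
    | "- width ((x + y) / 2) \<le> (x - y) / 2" "(x' - y) / 2 \<le> width ((x' + y) / 2)"
    by linarith
  then show ?thesis
  proof cases
    case 1
    then have "block_slope y x = -1"
      using width_bounds(1)[of "(x + y) / 2"] by (simp add: block_slope_def)
    then show ?thesis
      using block_slope_bounds[of y x'] by (simp add: abs_le_iff)
  next
    case 2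
    then have "block_slope y x' = 1"
      using width_bounds(1)[of "(x' + y) / 2"] by (simp add: block_slope_def)
    then show ?thesis
      using block_slope_bounds[of y x] by (simp add: abs_le_iff)
  next
    case 3
    have inside: "\<bar>(z - y) / 2\<bar> \<le> width ((z + y) / 2)" if "x \<le> z" "z \<le> x'" for z
      using 3 block_boundary_mono[of 1 x z y] block_boundary_mono[of "-1" z x' y] that
      unfolding abs_le_iff by (intro conjI) linarith+
    then have "inner_slope y x \<le> inner_slope y x'"
      using assms by (intro inner_slope_mono) (simp_all add: abs_block_ratio_le_one_iff)
    then show ?thesis
      using inside[of x] inside[of x'] assms by (simp add: block_slope_def)
  qed
qed

lemma convex_on_block: "convex_on UNIV (\<lambda>x. block x y)"
  by (rule convex_on_realI [where f' = "\<lambda>x. block_slope y x / 2 - 1/16"])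
    (auto intro: has_real_derivative_block block_slope_mono)

lemma block_commute: "block x y = block y x"
proof -
  have "huber ((x - y) / 2) w = huber ((y - x) / 2) w" for w
    using huber_minus[of "(y - x) / 2" w] by (simp add: minus_divide_left)
  then show ?thesis
    by (simp add: block_def add.commute)
qed

lemma abs_block_le: "\<bar>block x y\<bar> \<le> \<bar>x\<bar> + \<bar>y\<bar>"
proof -
  define w where "w = width ((x + y) / 2)"
  define S where "S = \<bar>x\<bar> + \<bar>y\<bar>"
  have "0 < w"
    using width_bounds(1) unfolding w_def by (rule order.strict_trans2 [rotated]) simp
  have "\<bar>w - 1\<bar> \<le> S / 8"
    using width_dist_one[of "(x + y) / 2"] abs_triangle_ineq[of x y]
    by (simp add: w_def S_def abs_divide)
  moreover have "\<bar>(x - y) / 2\<bar> \<le> S / 2" "\<bar>(x + y) / 16\<bar> \<le> S / 16"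
    using abs_triangle_ineq4[of x y] abs_triangle_ineq[of x y] by (simp_all add: S_def abs_divide)
  moreover note huber_bounds [OF \<open>0 < w\<close>, of "(x - y) / 2"]
  ultimately have "block x y \<le> S" "- S \<le> block x y"
    unfolding block_def w_def [symmetric] abs_le_iff by linarith+
  then show ?thesis
    by (simp add: S_def abs_le_iff)
qed

lemma block_diag: "block t t = - (t ^ 3) / (8 * (1 + t\<^sup>2))"
proof -
  have "block t t = width t / 2 - t / 8 - 1/2"
    using width_bounds(1)[of t] by (simp add: block_def huber_def)
  also have "\<dots> = - (t ^ 3) / (8 * (1 + t\<^sup>2))"
    using one_plus_square_pos[of t]
    by (simp add: width_def field_simps power2_eq_square power3_eq_cube)
  finally show ?thesis .
qed

section \<open>Superposition of rescaled blocks\<close>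

locale block_series =
  fixes c D :: "nat \<Rightarrow> real"
  assumes scale_pos: "\<And>n. 0 < D n"
    and weight_nonneg: "\<And>n. 0 \<le> c n"
    and summable_weight: "summable c"
begin

definition block_term :: "nat \<Rightarrow> real \<Rightarrow> real \<Rightarrow> real" where
  "block_term n x y = c n * D n * block (x / D n) (y / D n)"

definition series :: "real \<times> real \<Rightarrow> real" where
  "series p = (\<Sum>n. block_term n (fst p) (snd p))"

definition trace_term :: "nat \<Rightarrow> real \<Rightarrow> real" where
  "trace_term n t = - c n * t\<^sup>2 / (8 * ((D n)\<^sup>2 + t\<^sup>2))"

lemma abs_block_term_le: "\<bar>block_term n x y\<bar> \<le> c n * (\<bar>x\<bar> + \<bar>y\<bar>)"
proof -
  have "\<bar>block_term n x y\<bar> \<le> c n * D n * (\<bar>x / D n\<bar> + \<bar>y / D n\<bar>)"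
    using scale_pos[of n] weight_nonneg[of n] abs_block_le[of "x / D n" "y / D n"]
    by (simp add: block_term_def abs_mult mult_left_mono)
  also have "\<dots> = c n * (\<bar>x\<bar> + \<bar>y\<bar>)"
    using scale_pos[of n] by (simp add: abs_divide field_simps)
  finally show ?thesis .
qed

lemma summable_block_term: "summable (\<lambda>n. block_term n x y)"
  by (rule summable_comparison_test' [where g = "\<lambda>n. c n * (\<bar>x\<bar> + \<bar>y\<bar>)" and N = 0])
    (auto intro: abs_block_term_le summable_mult2 summable_weight)

lemma series_commute: "series (x, y) = series (y, x)"
  by (simp add: series_def block_term_def block_commute)

lemma convex_on_series_fst: "convex_on UNIV (\<lambda>x. series (x, y))"
proof -
  have "convex_on UNIV (\<lambda>x. block_term n x y)" for n
  proof -
    have "linear (\<lambda>x::real. x / D n)"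
      by (simp add: linear_iff add_divide_distrib)
    then have "convex_on UNIV (\<lambda>x. block (x / D n) (y / D n))"
      by (rule convex_on_compose_linear [OF convex_on_block, of _ "y / D n"])
    then show ?thesis
      unfolding block_term_def using scale_pos[of n] weight_nonneg[of n]
      by (intro convex_on_cmul) simp_all
  qed
  then show ?thesis
    unfolding series_def using summable_block_term by (intro convex_on_suminf) simp_all
qed

lemma sep_convex_on_series: "sep_convex_on U series"
  using convex_on_series_fst by (intro sep_convex_on_if_convex_slices) (simp_all add: series_commute)

lemma block_term_diag: "block_term n t t = t * trace_term n t"
proof -
  define X where "X = (D n)\<^sup>2 + t\<^sup>2"
  have "0 < D n" "0 < X"
    using scale_pos[of n] by (simp_all add: X_def add_pos_nonneg)
  then have "8 * (1 + (t / D n)\<^sup>2) = 8 * X / (D n)\<^sup>2"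
    by (simp add: X_def field_simps)
  then have "block (t / D n) (t / D n) = - (t ^ 3 / (D n) ^ 3) / (8 * X / (D n)\<^sup>2)"
    by (simp add: block_diag power_divide)
  also have "\<dots> = - (t ^ 3) / (D n * (8 * X))"
    using \<open>0 < D n\<close> \<open>0 < X\<close> by (simp add: field_simps power2_eq_square power3_eq_cube)
  finally have "block_term n t t = c n * D n * (- (t ^ 3) / (D n * (8 * X)))"
    by (simp add: block_term_def)
  also have "\<dots> = t * trace_term n t"
    unfolding trace_term_def X_def [symmetric]
    using \<open>0 < D n\<close> \<open>0 < X\<close> by (simp add: field_simps power2_eq_square power3_eq_cube)
  finally show ?thesis .
qed

lemma trace_term_nonpos: "trace_term n t \<le> 0"
  using weight_nonneg[of n] scale_pos[of n]
  by (simp add: trace_term_def divide_nonpos_pos add_pos_nonneg)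

lemma abs_trace_term_le: "\<bar>trace_term n t\<bar> \<le> c n / 8"
proof -
  define X where "X = (D n)\<^sup>2 + t\<^sup>2"
  have "t\<^sup>2 / X \<le> 1"
    using scale_pos[of n] by (simp add: X_def add_pos_nonneg)
  then have "c n * (t\<^sup>2 / X) \<le> c n * 1"
    using weight_nonneg[of n] by (intro mult_left_mono)
  moreover have "0 \<le> c n * (t\<^sup>2 / X)"
    using weight_nonneg[of n] by (simp add: X_def)
  moreover have "trace_term n t = - (c n * (t\<^sup>2 / X)) / 8"
    by (simp add: trace_term_def X_def)
  ultimately show ?thesis
    by simp
qed

lemma summable_trace_term: "summable (\<lambda>n. trace_term n t)"
  by (rule summable_comparison_test' [where g = "\<lambda>n. c n / 8" and N = 0])
    (use abs_trace_term_le summable_divide [OF summable_weight] in auto)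

lemma series_diag: "series (t, t) = t * (\<Sum>n. trace_term n t)"
  using suminf_mult [OF summable_trace_term, of t] by (simp add: series_def block_term_diag)

lemma series_diag_odd: "series (- t, - t) = - series (t, t)"
  by (simp add: series_diag trace_term_def)

lemma continuous_on_suminf_trace_term: "continuous_on UNIV (\<lambda>t. \<Sum>n. trace_term n t)"
proof (rule uniform_limit_theorem)
  show "uniform_limit UNIV (\<lambda>n t. \<Sum>i<n. trace_term i t) (\<lambda>t. \<Sum>n. trace_term n t) sequentially"
    by (rule Weierstrass_m_test [where M = "\<lambda>n. c n / 8"])
      (use abs_trace_term_le summable_divide [OF summable_weight] in auto)
  have "continuous_on UNIV (trace_term i)" for i
    unfolding trace_term_def [abs_def] using scale_pos [of i]
    by (intro continuous_intros) (auto simp: add_nonneg_eq_0_iff)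
  then show "\<forall>\<^sub>F n in sequentially. continuous_on UNIV (\<lambda>t. \<Sum>i<n. trace_term i t)"
    by (intro always_eventually allI continuous_on_sum) blast
qed simp

lemma has_real_derivative_series_diag: "((\<lambda>t. series (t, t)) has_real_derivative 0) (at 0)"
  unfolding DERIV_caratheodory_within
proof (intro exI conjI allI)
  show "series (z, z) - series (0, 0) = (\<Sum>n. trace_term n z) * (z - 0)" for z
    by (simp add: series_diag)
  show "continuous (at 0 within UNIV) (\<lambda>t. \<Sum>n. trace_term n t)"
    using continuous_on_suminf_trace_term by (simp add: continuous_on_eq_continuous_at)
  show "(\<Sum>n. trace_term n 0) = 0"
    by (simp add: trace_term_def)
qed

lemma suminf_trace_term_le: "(\<Sum>n. trace_term n t) \<le> trace_term k t"
proof -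
  have "(\<Sum>n\<in>{k}. - trace_term n t) \<le> (\<Sum>n. - trace_term n t)"
    using trace_term_nonpos by (intro sum_le_suminf summable_minus summable_trace_term) auto
  then show ?thesis
    using suminf_minus [OF summable_trace_term, of t] by simp
qed

lemma series_diag_le_trace_term: "0 \<le> t \<Longrightarrow> series (t, t) \<le> t * trace_term k t"
  by (simp add: series_diag mult_left_mono suminf_trace_term_le)

lemma series_diag_nonpos: "0 \<le> t \<Longrightarrow> series (t, t) \<le> 0"
  using series_diag_le_trace_term [of t 0] trace_term_nonpos [of 0 t]
  by (simp add: mult_nonneg_nonpos order_trans)

lemma series_diag_le_weight:
  assumes "D k \<le> t"
  shows "series (t, t) \<le> - c k * t / 16"
proof -
  define r where "r = t\<^sup>2 / ((D k)\<^sup>2 + t\<^sup>2)"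
  have "0 < D k"
    by (rule scale_pos)
  then have "(D k)\<^sup>2 + t\<^sup>2 \<le> 2 * t\<^sup>2" "0 < (D k)\<^sup>2 + t\<^sup>2"
    using assms by (simp_all add: power_mono add_pos_nonneg)
  then have "1/2 \<le> r"
    by (simp add: r_def le_divide_eq)
  then have "c k / 2 \<le> c k * r"
    using mult_left_mono [OF _ weight_nonneg [of k]] by fastforce
  moreover have "trace_term k t = - (c k * r) / 8"
    by (simp add: trace_term_def r_def)
  ultimately have "trace_term k t \<le> - c k / 16"
    by linarith
  then have "t * trace_term k t \<le> t * (- c k / 16)"
    using assms \<open>0 < D k\<close> by (intro mult_left_mono) auto
  then show ?thesis
    using series_diag_le_trace_term [of t k] assms \<open>0 < D k\<close> by (simp add: mult.commute)
qed

lemma series_diag_le: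
  assumes "0 \<le> t" and small: "\<And>k. t < D k \<Longrightarrow> \<bar>v\<bar> \<le> t / 2 ^ k" and "B \<le> v"
    and "16 * \<bar>B\<bar> \<le> c 0 * D 0" "\<And>j. 16 \<le> 2 ^ j * c (Suc j)"
  shows "series (t, t) \<le> v"
proof (cases "\<exists>k. D k \<le> t")
  case False
  have "0 \<le> v"
  proof (rule LIMSEQ_le_const2 [OF LIMSEQ_divide_realpow_zero [of 2 "- t"]])
    show "\<exists>N. \<forall>n\<ge>N. - t / 2 ^ n \<le> v"
      using small False by (metis abs_le_D2 minus_divide_left minus_le_iff not_le)
  qed simp
  then show ?thesis
    using series_diag_nonpos [OF \<open>0 \<le> t\<close>] by linarith
next
  case True
  show ?thesis
  proof (cases "D 0 \<le> t")
    case True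
    then have "\<bar>B\<bar> \<le> \<bar>B\<bar> * (t / D 0)"
      using scale_pos [of 0] by (intro mult_le_cancel_left1 [THEN iffD2]) simp
    also have "\<dots> \<le> c 0 * t / 16"
      using assms(4) scale_pos [of 0] \<open>0 \<le> t\<close> by (simp add: field_simps mult_left_mono)
    finally show ?thesis
      using series_diag_le_weight [OF True] \<open>B \<le> v\<close> by linarith
  next
    case False
    with \<open>\<exists>k. D k \<le> t\<close> obtain j where "t < D j" "D (Suc j) \<le> t"
      using exists_least_lemma [of "\<lambda>k. D k \<le> t"] by (auto simp: not_le)
    have "t / 2 ^ j \<le> c (Suc j) * t / 16"
      using assms(5) [of j] \<open>0 \<le> t\<close> by (simp add: field_simps mult_left_mono)
    then show ?thesis
      using series_diag_le_weight [OF \<open>D (Suc j) \<le> t\<close>] small [OF \<open>t < D j\<close>] by linarith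
  qed
qed

end

section \<open>Choice of scales\<close>

lemma dyadic_scales:
  fixes h :: "real \<Rightarrow> real"
  assumes "h 0 = 0" "(h has_real_derivative 0) (at 0 within S)"
  obtains D :: "nat \<Rightarrow> real"
  where "\<And>k. 0 < D k" "\<And>k t. t \<in> S \<Longrightarrow> \<bar>t\<bar> < D k \<Longrightarrow> \<bar>h t\<bar> \<le> \<bar>t\<bar> / 2 ^ k"
proof -
  have lim: "((\<lambda>t. h t / t) \<longlongrightarrow> 0) (at 0 within S)"
    using assms by (simp add: has_field_derivative_iff)
  have "\<exists>\<delta>>0. \<forall>t\<in>S. \<bar>t\<bar> < \<delta> \<longrightarrow> \<bar>h t\<bar> \<le> \<bar>t\<bar> / 2 ^ k" for k
  proof -
    obtain \<delta> where "0 < \<delta>" and \<delta>: "\<And>t. t \<in> S \<Longrightarrow> t \<noteq> 0 \<Longrightarrow> \<bar>t\<bar> < \<delta> \<Longrightarrow> \<bar>h t / t\<bar> < 1 / 2 ^ k"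
      using tendstoD [OF lim, of "1 / 2 ^ k"] by (auto simp: eventually_at dist_real_def)
    have "\<bar>h t\<bar> \<le> \<bar>t\<bar> / 2 ^ k" if "t \<in> S" "\<bar>t\<bar> < \<delta>" for t
    proof (cases "t = 0")
      case False
      then show ?thesis
        using \<delta> [OF that(1) False that(2)] by (simp add: abs_divide divide_simps)
    qed (simp add: assms(1))
    then show ?thesis
      using \<open>0 < \<delta>\<close> by blast
  qed
  then show ?thesis
    using that by metis
qed

theorem corollary8p2:
  fixes a :: real and h :: "real \<Rightarrow> real"
  assumes "a > 0"
    and "\<exists>B. \<forall>t\<in>{0..<a}. B \<le> h t"
    and "h 0 = 0"
    and "(h has_real_derivative 0) (at 0 within {0..<a})"
  shows "\<exists>f :: real \<times> real \<Rightarrow> real.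
           sep_convex_on ({-a<..<a} \<times> {-a<..<a}) f \<and>
           (\<forall>t\<in>{-a<..<a}. f (-t, -t) = - f (t, t)) \<and>
           ((\<lambda>t. f (t, t)) has_real_derivative 0) (at 0) \<and>
           (\<forall>t\<in>{0..<a}. f (t, t) \<le> h t)"
proof -
  obtain B where B: "\<And>t. t \<in> {0..<a} \<Longrightarrow> B \<le> h t"
    using assms(2) by blast
  obtain D where D: "\<And>k. 0 < D k"
    and small: "\<And>k t. t \<in> {0..<a} \<Longrightarrow> \<bar>t\<bar> < D k \<Longrightarrow> \<bar>h t\<bar> \<le> \<bar>t\<bar> / 2 ^ k"
    using dyadic_scales [OF assms(3,4)] by blast
  define M where "M = 32 + 16 * \<bar>B\<bar> / D 0"
  have "0 \<le> M" "summable (\<lambda>n. M * (1/2) ^ n)"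
    using D [of 0] by (simp_all add: M_def)
  then interpret block_series "\<lambda>n. M / 2 ^ n" D
    using D by unfold_locales (simp_all add: power_one_over)
  have "series (t, t) \<le> h t" if "t \<in> {0..<a}" for t
    using that D [of 0] small [OF that] B [OF that]
    by (intro series_diag_le) (auto simp: M_def field_simps)
  then show ?thesis
    using sep_convex_on_series series_diag_odd has_real_derivative_series_diag by blast
qed

end
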